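(* Let $(X_j,Y_j,S_j)$, $j\in\mathbb{Z}$, be a FAIM process. Then there exists a non-increasing sequence $\psi(N)$ with $\psi(N)\to1$ as $N\to\infty$ and $\psi(0)<\infty$ such that for all $N>M\ge L\ge1$, \[P_{X_1^L,Y_1^L,X_{M+1}^N,Y_{M+1}^N}\le\psi(M-L)\cdot P_{X_1^L,Y_1^L}\cdot P_{X_{M+1}^N,Y_{M+1}^N}\] (pointwise, for all realizations).
   Context: FAIM process: $(X_j,Y_j,S_j)$, $j\in\mathbb{Z}$, is strictly stationary, $X_j\in\{0,1\}$, $Y_j$ takes values in a finite alphabet, $S_j$ in a finite set $\mathcal{S}$; the conditional law $P_{X_j,Y_j,S_j|S_{j-1}}$ does not depend on $j$; and conditioned on $S_{j-1}$, $\{X_k,Y_k,S_k\}_{k\ge j}$ is independent of $\{X_l,Y_l,S_{l-1}\}_{l<j}$. The state sequence $(S_j)$ is a homogeneous, finite-state, stationary, aperiodic and irreducible Markov chain. *)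

theory Defs
  imports "HOL-Probability.Probability"
begin

(* X_j takes values in {0,1} (modelled as bool), Y_j in a finite type 'y,
   S_j in a finite type 's (the state set \<S> is the whole type 's). *)

definition ev :: "'w measure \<Rightarrow> ('w \<Rightarrow> bool) \<Rightarrow> 'w set" where
  "ev M P = {w \<in> space M. P w}"

(* strict stationarity, expressed via all finite cylinder probabilities
   (all alphabets are finite) *)
definition strictly_stationary ::
  "'w measure \<Rightarrow> (int \<Rightarrow> 'w \<Rightarrow> bool) \<Rightarrow> (int \<Rightarrow> 'w \<Rightarrow> 'y) \<Rightarrow> (int \<Rightarrow> 'w \<Rightarrow> 's) \<Rightarrow> bool" where
  "strictly_stationary M X Y S \<longleftrightarrow>
     (\<forall>k n x y s.
        measure M (ev M (\<lambda>w. \<forall>i<n. X (k + int i) w = x i \<and> Y (k + int i) w = y i \<and> S (k + int i) w = s i))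
      = measure M (ev M (\<lambda>w. \<forall>i<n. X (int i) w = x i \<and> Y (int i) w = y i \<and> S (int i) w = s i)))"

(* the conditional law P_{X_j,Y_j,S_j | S_{j-1}} does not depend on j
   (cross-multiplied form of P(.|S_{j-1}=s') = P(.|S_0=s')) *)
definition time_invariant_kernel ::
  "'w measure \<Rightarrow> (int \<Rightarrow> 'w \<Rightarrow> bool) \<Rightarrow> (int \<Rightarrow> 'w \<Rightarrow> 'y) \<Rightarrow> (int \<Rightarrow> 'w \<Rightarrow> 's) \<Rightarrow> bool" where
  "time_invariant_kernel M X Y S \<longleftrightarrow>
     (\<forall>j s' x y s.
        measure M (ev M (\<lambda>w. X j w = x \<and> Y j w = y \<and> S j w = s \<and> S (j - 1) w = s'))
          * measure M (ev M (\<lambda>w. S 0 w = s'))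
      = measure M (ev M (\<lambda>w. X 1 w = x \<and> Y 1 w = y \<and> S 1 w = s \<and> S 0 w = s'))
          * measure M (ev M (\<lambda>w. S (j - 1) w = s')))"

(* conditioned on S_{j-1}, {X_k,Y_k,S_k}_{k>=j} is independent of {X_l,Y_l,S_{l-1}}_{l<j};
   stated for all finite cylinder events of past and future (finite alphabets) *)
definition state_cond_indep ::
  "'w measure \<Rightarrow> (int \<Rightarrow> 'w \<Rightarrow> bool) \<Rightarrow> (int \<Rightarrow> 'w \<Rightarrow> 'y) \<Rightarrow> (int \<Rightarrow> 'w \<Rightarrow> 's) \<Rightarrow> bool" where
  "state_cond_indep M X Y S \<longleftrightarrow>
     (\<forall>j m n xp yp sp xf yf sf s.
        let A = ev M (\<lambda>w. \<forall>i<m. X (j - 1 - int i) w = xp i \<and> Y (j - 1 - int i) w = yp i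
                                 \<and> S (j - 2 - int i) w = sp i);
            B = ev M (\<lambda>w. \<forall>i<n. X (j + int i) w = xf i \<and> Y (j + int i) w = yf i
                                 \<and> S (j + int i) w = sf i);
            C = ev M (\<lambda>w. S (j - 1) w = s)
        in measure M (A \<inter> B \<inter> C) * measure M C = measure M (A \<inter> C) * measure M (B \<inter> C))"

definition markov_chain_states :: "'w measure \<Rightarrow> (int \<Rightarrow> 'w \<Rightarrow> 's) \<Rightarrow> bool" where
  "markov_chain_states M S \<longleftrightarrow>
     (\<forall>j n sp s t.
        measure M (ev M (\<lambda>w. (\<forall>i<n. S (j - 2 - int i) w = sp i) \<and> S (j - 1) w = s \<and> S j w = t))
          * measure M (ev M (\<lambda>w. S (j - 1) w = s))
      = measure M (ev M (\<lambda>w. (\<forall>i<n. S (j - 2 - int i) w = sp i) \<and> S (j - 1) w = s))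
          * measure M (ev M (\<lambda>w. S (j - 1) w = s \<and> S j w = t)))
   \<and> (\<forall>j s t.
        measure M (ev M (\<lambda>w. S (j - 1) w = s \<and> S j w = t)) * measure M (ev M (\<lambda>w. S 0 w = s))
      = measure M (ev M (\<lambda>w. S 0 w = s \<and> S 1 w = t)) * measure M (ev M (\<lambda>w. S (j - 1) w = s)))
   \<and> (\<forall>j s. measure M (ev M (\<lambda>w. S j w = s)) = measure M (ev M (\<lambda>w. S 0 w = s)))"

definition trans_prob :: "'w measure \<Rightarrow> (int \<Rightarrow> 'w \<Rightarrow> 's) \<Rightarrow> 's \<Rightarrow> 's \<Rightarrow> real" where
  "trans_prob M S s t =
     measure M (ev M (\<lambda>w. S 0 w = s \<and> S 1 w = t)) / measure M (ev M (\<lambda>w. S 0 w = s))"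

fun nstep_prob :: "'w measure \<Rightarrow> (int \<Rightarrow> 'w \<Rightarrow> 's::finite) \<Rightarrow> nat \<Rightarrow> 's \<Rightarrow> 's \<Rightarrow> real" where
  "nstep_prob M S 0 s t = (if s = t then 1 else 0)"
| "nstep_prob M S (Suc n) s t = (\<Sum>u\<in>UNIV. nstep_prob M S n s u * trans_prob M S u t)"

definition irreducible_chain :: "'w measure \<Rightarrow> (int \<Rightarrow> 'w \<Rightarrow> 's::finite) \<Rightarrow> bool" where
  "irreducible_chain M S \<longleftrightarrow> (\<forall>s t. \<exists>n>0. nstep_prob M S n s t > 0)"

definition aperiodic_chain :: "'w measure \<Rightarrow> (int \<Rightarrow> 'w \<Rightarrow> 's::finite) \<Rightarrow> bool" where
  "aperiodic_chain M S \<longleftrightarrow> (\<forall>s. Gcd {n. n > 0 \<and> nstep_prob M S n s s > 0} = 1)"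

definition FAIM ::
  "'w measure \<Rightarrow> (int \<Rightarrow> 'w \<Rightarrow> bool) \<Rightarrow> (int \<Rightarrow> 'w \<Rightarrow> 'y::finite) \<Rightarrow> (int \<Rightarrow> 'w \<Rightarrow> 's::finite) \<Rightarrow> bool" where
  "FAIM M X Y S \<longleftrightarrow>
     prob_space M
   \<and> (\<forall>j. X j \<in> measurable M (count_space UNIV) \<and> Y j \<in> measurable M (count_space UNIV)
          \<and> S j \<in> measurable M (count_space UNIV))
   \<and> strictly_stationary M X Y S
   \<and> time_invariant_kernel M X Y S
   \<and> state_cond_indep M X Y S
   \<and> markov_chain_states M S
   \<and> irreducible_chain M S
   \<and> aperiodic_chain M S"

end

theory Submission
  imports Defs
begin

(*
  Let pi be the stationary law of the state chain and T^k its k-step transition matrix.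
  Conditioning on S_L and S_M, the conditional independence of past and future given the
  current state factorises the joint probability of the two observation windows as

    P(A, S_L = s, S_M = t, B) * pi(t) = P(A, S_L = s) * T^(M-L)(s,t) * P(S_M = t, B).

  Hence P(A, B) <= psi(M - L) * P(A) * P(B) with psi(k) = max_{s,t} T^k(s,t) / pi(t).
  This ratio is non-increasing because T^(k+1) = T T^k is an average of rows of T^k, and it
  tends to 1 because an irreducible aperiodic chain is primitive, so T^k(s,t) -> pi(t).
*)

section \<open>Numerical semigroups\<close>

lemma add_closed_mult_mem:
  fixes T :: "nat set"
  assumes "0 \<in> T" and "\<And>a b. a \<in> T \<Longrightarrow> b \<in> T \<Longrightarrow> a + b \<in> T" and "x \<in> T"
  shows "m * x \<in> T"
  using assms(3) by (induction m) (simp_all add: assms(1,2))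

lemma add_closed_Gcd_eq_1_consecutive:
  fixes T :: "nat set"
  assumes zero: "0 \<in> T" and add: "\<And>a b. a \<in> T \<Longrightarrow> b \<in> T \<Longrightarrow> a + b \<in> T"
    and gcd: "Gcd T = 1"
  shows "\<exists>q\<in>T. q + 1 \<in> T"
proof -
  have mult: "m * x \<in> T" if "x \<in> T" for m x
    by (rule add_closed_mult_mem[where T = T]) (fact zero add that)+
  define D where "D = {d. d > 0 \<and> (\<exists>q\<in>T. q + d \<in> T)}"
  obtain a0 where "a0 \<in> T" "a0 > 0"
    using gcd Gcd_0_iff[of T] by (metis insertCI not_gr0 subsetI zero_neq_one)
  then have "a0 \<in> D" using zero unfolding D_def by force
  define g where "g = (LEAST d. d \<in> D)"
  have "g \<in> D" unfolding g_def by (rule LeastI) (rule \<open>a0 \<in> D\<close>)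
  then obtain q0 where q0: "q0 \<in> T" "q0 + g \<in> T" "g > 0" unfolding D_def by blast
  \<comment> \<open>The least positive gap between two elements divides every element.\<close>
  have "g dvd s" if s: "s \<in> T" for s
  proof (rule ccontr)
    assume "\<not> g dvd s"
    then have r: "s mod g > 0" "s mod g < g" using q0(3) by (auto simp: dvd_eq_mod_eq_0)
    have eq: "(s div g) * (q0 + g) + s mod g = s + (s div g) * q0"
      by (simp add: algebra_simps)
    have "(s div g) * (q0 + g) \<in> T" using mult[OF q0(2)] .
    moreover have "s + (s div g) * q0 \<in> T" using s mult[OF q0(1)] by (rule add)
    ultimately have "s mod g \<in> D" using r(1) eq unfolding D_def by (metis (mono_tags, lifting) mem_Collect_eq)
    then show False using Least_le[of "\<lambda>d. d \<in> D" "s mod g"] r(2) unfolding g_def by simp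
  qed
  then have "g dvd Gcd T" by (rule Gcd_greatest)
  then have "g = 1" using gcd by simp
  then show ?thesis using q0 by blast
qed

lemma add_closed_consecutive_ge:
  fixes T :: "nat set"
  assumes zero: "0 \<in> T" and add: "\<And>a b. a \<in> T \<Longrightarrow> b \<in> T \<Longrightarrow> a + b \<in> T"
    and q: "q \<in> T" "q + 1 \<in> T" and n: "q * q \<le> n"
  shows "n \<in> T"
proof -
  have mult: "m * x \<in> T" if "x \<in> T" for m x
    by (rule add_closed_mult_mem[where T = T]) (fact zero add that)+
  show ?thesis
  proof (cases "q = 0")
    case True
    then show ?thesis using mult[OF q(2), of n] by simp
  next
    case False
    have "q \<le> n div q" using n False by (metis div_le_mono nonzero_mult_div_cancel_left)
    moreover have "n mod q < q" using False by simp
    ultimately have "n mod q \<le> n div q" by linarith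
    then obtain d where d: "n div q = n mod q + d" using le_Suc_ex by blast
    have "n = d * q + n mod q * (q + 1)"
      using div_mult_mod_eq[of n q] d by (simp add: algebra_simps)
    also have "\<dots> \<in> T" using mult[OF q(1)] mult[OF q(2)] by (rule add)
    finally show ?thesis .
  qed
qed

lemma add_closed_Gcd_eq_1_eventually_mem:
  fixes T :: "nat set"
  assumes "0 \<in> T" and "\<And>a b. a \<in> T \<Longrightarrow> b \<in> T \<Longrightarrow> a + b \<in> T" and "Gcd T = 1"
  shows "\<exists>N. \<forall>n\<ge>N. n \<in> T"
  using add_closed_Gcd_eq_1_consecutive[OF assms] add_closed_consecutive_ge[OF assms(1,2)] by blast

section \<open>Probabilities of finitely valued observations\<close>

lemma ev_conj: "ev M (\<lambda>w. A w \<and> B w) = ev M A \<inter> ev M B"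
  by (auto simp: ev_def)

lemma measure_ev_cong: "(\<And>w. w \<in> space M \<Longrightarrow> A w = B w) \<Longrightarrow> measure M (ev M A) = measure M (ev M B)"
  unfolding ev_def by (metis (mono_tags, lifting))

lemma sets_ev_finite_valued:
  assumes "finite V" "\<And>w. w \<in> space M \<Longrightarrow> g w \<in> V" "\<And>v. v \<in> V \<Longrightarrow> ev M (\<lambda>w. g w = v) \<in> sets M"
  shows "ev M (\<lambda>w. R (g w)) \<in> sets M"
proof -
  have "ev M (\<lambda>w. R (g w)) = (\<Union>v\<in>{v\<in>V. R v}. ev M (\<lambda>w. g w = v))"
    using assms(2) by (auto simp: ev_def)
  also have "\<dots> \<in> sets M" using assms by (intro sets.finite_UN) auto
  finally show ?thesis .
qed

context finite_measure
begin

lemma measure_ev_eq_sum_values: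
  assumes "finite V" "\<And>w. w \<in> space M \<Longrightarrow> g w \<in> V"
    and "\<And>v. v \<in> V \<Longrightarrow> ev M (\<lambda>w. Q w \<and> g w = v) \<in> sets M"
  shows "measure M (ev M Q) = (\<Sum>v\<in>V. measure M (ev M (\<lambda>w. Q w \<and> g w = v)))"
proof -
  have "ev M Q = (\<Union>v\<in>V. ev M (\<lambda>w. Q w \<and> g w = v))"
    using assms(2) by (auto simp: ev_def)
  moreover have "measure M (\<Union>v\<in>V. ev M (\<lambda>w. Q w \<and> g w = v))
      = (\<Sum>v\<in>V. measure M (ev M (\<lambda>w. Q w \<and> g w = v)))"
    by (rule finite_measure_finite_Union) (use assms in \<open>auto simp: disjoint_family_on_def ev_def\<close>)
  ultimately show ?thesis by simp
qed

lemma measure_ev_pred_eq_sum: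
  assumes V: "finite V" "\<And>w. w \<in> space M \<Longrightarrow> g w \<in> V" "\<And>v. v \<in> V \<Longrightarrow> ev M (\<lambda>w. g w = v) \<in> sets M"
    and Z: "ev M Z \<in> sets M"
  shows "measure M (ev M (\<lambda>w. R (g w) \<and> Z w))
       = (\<Sum>v\<in>{v\<in>V. R v}. measure M (ev M (\<lambda>w. g w = v \<and> Z w)))"
proof -
  have level: "ev M (\<lambda>w. R (g w) \<and> Z w \<and> g w = v) = (if R v then ev M (\<lambda>w. g w = v \<and> Z w) else {})"
    for v by (auto simp: ev_def)
  have "measure M (ev M (\<lambda>w. R (g w) \<and> Z w))
      = (\<Sum>v\<in>V. measure M (ev M (\<lambda>w. (R (g w) \<and> Z w) \<and> g w = v)))"
    using V Z sets_ev_finite_valued[OF V, of R]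
    by (intro measure_ev_eq_sum_values) (auto simp: level ev_conj sets.Int)
  also have "\<dots> = (\<Sum>v\<in>V. if R v then measure M (ev M (\<lambda>w. g w = v \<and> Z w)) else 0)"
    by (intro sum.cong refl) (simp add: level)
  finally show ?thesis using V(1) by (simp add: sum.inter_filter)
qed

end

section \<open>The stationary state chain\<close>

lemma tendsto_Max_finite:
  fixes f :: "'i \<Rightarrow> 'a \<Rightarrow> 'b::linorder_topology"
  assumes "finite I" "I \<noteq> {}" "\<And>i. i \<in> I \<Longrightarrow> (f i \<longlongrightarrow> l) F"
  shows "((\<lambda>x. Max ((\<lambda>i. f i x) ` I)) \<longlongrightarrow> l) F"
  using assms
proof (induction I rule: finite_ne_induct)
  case (insert i I)
  then have "((\<lambda>x. max (f i x) (Max ((\<lambda>i. f i x) ` I))) \<longlongrightarrow> max l l) F"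
    by (intro tendsto_max) auto
  then show ?case using insert by simp
qed simp

lemma nstep_prob_add:
  "nstep_prob M S (a + b) s t = (\<Sum>u\<in>UNIV. nstep_prob M S a s u * nstep_prob M S b u t)"
proof (induction b arbitrary: t)
  case (Suc b)
  have "nstep_prob M S (a + Suc b) s t
      = (\<Sum>v\<in>UNIV. \<Sum>u\<in>UNIV. nstep_prob M S a s u * nstep_prob M S b u v * trans_prob M S v t)"
    by (simp add: Suc sum_distrib_right mult.assoc)
  also have "\<dots> = (\<Sum>u\<in>UNIV. \<Sum>v\<in>UNIV. nstep_prob M S a s u * nstep_prob M S b u v * trans_prob M S v t)"
    by (rule sum.swap)
  finally show ?case by (simp add: sum_distrib_left mult.assoc)
qed (simp add: if_distrib cong: if_cong)

lemma nstep_prob_1: "nstep_prob M S 1 s t = trans_prob M S s t"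
proof -
  have "nstep_prob M S 1 s t = (\<Sum>u\<in>UNIV. if s = u then trans_prob M S u t else 0)"
    by (simp only: One_nat_def nstep_prob.simps, rule sum.cong) auto
  also have "\<dots> = trans_prob M S s t" by simp
  finally show ?thesis .
qed

lemma nstep_prob_Suc_left:
  "nstep_prob M S (Suc n) s t = (\<Sum>u\<in>UNIV. trans_prob M S s u * nstep_prob M S n u t)"
  using nstep_prob_add[of M S 1 n s t] unfolding nstep_prob_1 by simp

locale stationary_state_chain =
  fixes M :: "'w measure" and S :: "int \<Rightarrow> 'w \<Rightarrow> 's::finite"
  assumes prob_space_M: "prob_space M"
    and measurable_S [measurable]: "S j \<in> measurable M (count_space UNIV)"
    and markov: "markov_chain_states M S"
    and irreducible: "irreducible_chain M S"
    and aperiodic: "aperiodic_chain M S"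
begin

sublocale prob_space M by (rule prob_space_M)

abbreviation Pr :: "('w \<Rightarrow> bool) \<Rightarrow> real" where "Pr P \<equiv> measure M (ev M P)"
abbreviation T where "T \<equiv> trans_prob M S"
abbreviation Tpow where "Tpow \<equiv> nstep_prob M S"

definition stat :: "'s \<Rightarrow> real" where "stat s = Pr (\<lambda>w. S 0 w = s)"

lemma Pr_state: "Pr (\<lambda>w. S j w = s) = stat s"
  using markov unfolding markov_chain_states_def stat_def by blast

lemma Pr_eq_sum_state:
  assumes "\<And>s. ev M (\<lambda>w. Q w \<and> S j w = s) \<in> sets M"
  shows "Pr Q = (\<Sum>s\<in>UNIV. Pr (\<lambda>w. Q w \<and> S j w = s))"
  by (rule measure_ev_eq_sum_values[where g = "S j"]) (use assms in auto)

lemma Tpow_nonneg: "Tpow n s t \<ge> 0"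
  by (induction n arbitrary: t) (auto intro!: sum_nonneg simp: trans_prob_def)

lemma stat_pos: "stat s > 0"
proof -
  obtain n where n: "n > 0" "Tpow n s s > 0"
    using irreducible unfolding irreducible_chain_def by blast
  then obtain n' where "n = Suc n'" by (cases n) auto
  show ?thesis
  proof (rule ccontr)
    assume "\<not> stat s > 0"
    then have "stat s = 0"
      using measure_nonneg[of M "ev M (\<lambda>w. S 0 w = s)"] unfolding stat_def by linarith
    then have "T s u = 0" for u by (simp add: trans_prob_def stat_def[symmetric])
    then have "Tpow n s s = 0" unfolding \<open>n = Suc n'\<close> nstep_prob_Suc_left by simp
    with n show False by simp
  qed
qed

lemma T_row_sum: "(\<Sum>t\<in>UNIV. T s t) = 1"
proof -
  have "stat s = (\<Sum>t\<in>UNIV. Pr (\<lambda>w. S 0 w = s \<and> S 1 w = t))"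
    unfolding stat_def by (rule Pr_eq_sum_state) (auto simp: ev_def)
  then show ?thesis using stat_pos[of s]
    by (simp add: trans_prob_def stat_def[symmetric] sum_divide_distrib[symmetric])
qed

lemma Tpow_row_sum: "(\<Sum>t\<in>UNIV. Tpow n s t) = 1"
proof (induction n arbitrary: s)
  case (Suc n)
  have "(\<Sum>t\<in>UNIV. Tpow (Suc n) s t) = (\<Sum>u\<in>UNIV. T s u * (\<Sum>t\<in>UNIV. Tpow n u t))"
    by (simp only: nstep_prob_Suc_left sum_distrib_left) (rule sum.swap)
  then show ?case by (simp add: Suc T_row_sum)
qed simp

lemma Tpow_le_1: "Tpow n s t \<le> 1"
  using member_le_sum[of t UNIV "Tpow n s"] Tpow_nonneg by (simp add: Tpow_row_sum)

lemma stat_sum: "(\<Sum>s\<in>UNIV. stat s) = 1"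
proof -
  have "Pr (\<lambda>w. True) = (\<Sum>s\<in>UNIV. Pr (\<lambda>w. True \<and> S 0 w = s))"
    by (rule Pr_eq_sum_state) (auto simp: ev_def)
  moreover have "Pr (\<lambda>w. True) = 1" by (simp add: ev_def prob_space)
  ultimately show ?thesis by (simp add: stat_def)
qed

lemma stat_le_1: "stat s \<le> 1"
  by (simp add: stat_def)

lemma state_pair_prob: "Pr (\<lambda>w. S (j - 1) w = u \<and> S j w = t) = stat u * T u t"
proof -
  have "Pr (\<lambda>w. S (j - 1) w = u \<and> S j w = t) * Pr (\<lambda>w. S 0 w = u)
      = Pr (\<lambda>w. S 0 w = u \<and> S 1 w = t) * Pr (\<lambda>w. S (j - 1) w = u)"
    using markov unfolding markov_chain_states_def by blast
  then have "Pr (\<lambda>w. S (j - 1) w = u \<and> S j w = t) = Pr (\<lambda>w. S 0 w = u \<and> S 1 w = t)"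
    using stat_pos[of u] by (simp add: Pr_state stat_def[symmetric])
  then show ?thesis using stat_pos[of u] by (simp add: trans_prob_def stat_def[symmetric])
qed

lemma stat_stationary: "(\<Sum>s\<in>UNIV. stat s * T s t) = stat t"
proof -
  have "Pr (\<lambda>w. S 1 w = t) = (\<Sum>s\<in>UNIV. Pr (\<lambda>w. S 1 w = t \<and> S 0 w = s))"
    by (rule Pr_eq_sum_state) (auto simp: ev_def)
  also have "\<dots> = (\<Sum>s\<in>UNIV. Pr (\<lambda>w. S (1 - 1) w = s \<and> S 1 w = t))"
    by (intro sum.cong refl measure_ev_cong) auto
  finally show ?thesis by (simp only: state_pair_prob Pr_state)
qed

lemma stat_stationary_Tpow: "(\<Sum>s\<in>UNIV. stat s * Tpow n s t) = stat t"
proof (induction n arbitrary: t)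
  case (Suc n)
  have "(\<Sum>s\<in>UNIV. stat s * Tpow (Suc n) s t) = (\<Sum>u\<in>UNIV. (\<Sum>s\<in>UNIV. stat s * Tpow n s u) * T u t)"
    by (simp add: sum_distrib_left sum_distrib_right mult.assoc) (rule sum.swap)
  then show ?case by (simp add: Suc stat_stationary)
qed (simp add: if_distrib cong: if_cong)

lemma Tpow_add_ge: "Tpow (a + b) s t \<ge> Tpow a s u * Tpow b u t"
  unfolding nstep_prob_add
  by (rule member_le_sum[where f = "\<lambda>v. Tpow a s v * Tpow b v t"]) (simp_all add: Tpow_nonneg)

lemma Tpow_eventually_pos_diag: "\<exists>N. \<forall>n\<ge>N. Tpow n s s > 0"
proof -
  have "\<exists>N. \<forall>n\<ge>N. n \<in> {n. Tpow n s s > 0}"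
  proof (rule add_closed_Gcd_eq_1_eventually_mem)
    show "0 \<in> {n. Tpow n s s > 0}" by simp
    show "a + b \<in> {n. Tpow n s s > 0}" if "a \<in> {n. Tpow n s s > 0}" "b \<in> {n. Tpow n s s > 0}" for a b
      using that Tpow_add_ge[of a s s b s] by (auto intro: less_le_trans[OF mult_pos_pos])
    have "{n. Tpow n s s > 0} = insert 0 {n. n > 0 \<and> Tpow n s s > 0}" by auto
    then show "Gcd {n. Tpow n s s > 0} = 1"
      using aperiodic unfolding aperiodic_chain_def by simp
  qed
  then show ?thesis by simp
qed

lemma Tpow_primitive: "\<exists>n>0. \<forall>s t. Tpow n s t > 0"
proof -
  obtain N where N: "\<And>s n. n \<ge> N s \<Longrightarrow> Tpow n s s > 0"
    using Tpow_eventually_pos_diag by metis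
  obtain m where m: "\<And>s t. m s t > 0 \<and> Tpow (m s t) s t > 0"
    using irreducible unfolding irreducible_chain_def by metis
  \<comment> \<open>Wait at \<open>s\<close> long enough, then walk to \<open>t\<close>.\<close>
  define n where "n = (\<Sum>s\<in>UNIV. N s) + (\<Sum>s\<in>UNIV. \<Sum>t\<in>UNIV. m s t)"
  have N_le: "N s \<le> n - m s t" and m_le: "m s t \<le> n" for s t
  proof -
    have "m s t \<le> (\<Sum>t\<in>UNIV. m s t)" by (rule member_le_sum) auto
    also have "\<dots> \<le> (\<Sum>s\<in>UNIV. \<Sum>t\<in>UNIV. m s t)"
      by (rule member_le_sum[where f = "\<lambda>s. \<Sum>t\<in>UNIV. m s t"]) auto
    finally have "m s t \<le> (\<Sum>s\<in>UNIV. \<Sum>t\<in>UNIV. m s t)" .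
    moreover have "N s \<le> (\<Sum>s\<in>UNIV. N s)" by (rule member_le_sum) auto
    ultimately show "N s \<le> n - m s t" "m s t \<le> n" unfolding n_def by linarith+
  qed
  have "Tpow n s t > 0" for s t
  proof -
    have "0 < Tpow (n - m s t) s s * Tpow (m s t) s t" using N[OF N_le] m by simp
    also have "\<dots> \<le> Tpow (n - m s t + m s t) s t" by (rule Tpow_add_ge)
    finally show ?thesis using m_le[of s t] by simp
  qed
  moreover have "n > 0" using m m_le by (meson less_le_trans)
  ultimately show ?thesis by blast
qed

lemma Tpow_deviation_eq:
  "Tpow (n + r) s t - stat t = (\<Sum>u\<in>UNIV. (Tpow n s u - \<delta> * stat u) * (Tpow r u t - stat t))"
proof -
  have "(\<Sum>u\<in>UNIV. (Tpow n s u - \<delta> * stat u) * (Tpow r u t - stat t))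
      = (\<Sum>u\<in>UNIV. Tpow n s u * Tpow r u t) - stat t * (\<Sum>u\<in>UNIV. Tpow n s u)
        - \<delta> * (\<Sum>u\<in>UNIV. stat u * Tpow r u t) + \<delta> * stat t * (\<Sum>u\<in>UNIV. stat u)"
    by (simp add: algebra_simps sum_subtractf sum.distrib sum_distrib_left sum_distrib_right)
  then show ?thesis
    by (simp add: Tpow_row_sum stat_stationary_Tpow stat_sum nstep_prob_add)
qed

lemma Tpow_deviation_le:
  assumes n: "n > 0" and \<delta>: "0 \<le> \<delta>" "\<And>s t. \<delta> \<le> Tpow n s t"
  shows "\<bar>Tpow k s t - stat t\<bar> \<le> (1 - \<delta>) ^ (k div n)"
proof (induction k arbitrary: s t rule: less_induct)
  case (less k)
  show ?case
  proof (cases "k < n")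
    case True
    then show ?thesis
      using Tpow_nonneg[of k s t] Tpow_le_1[of k s t] stat_pos[of t] stat_le_1[of t] by simp
  next
    case False
    then obtain r where k: "k = n + r" by (metis le_add_diff_inverse not_less)
    \<comment> \<open>Doeblin: removing \<open>\<delta> * stat\<close> from a row of \<open>Tpow n\<close> leaves weights of mass \<open>1 - \<delta>\<close>.\<close>
    define w where "w u = Tpow n s u - \<delta> * stat u" for u
    have w_nonneg: "w u \<ge> 0" for u
      using mult_left_mono[OF stat_le_1[of u] \<delta>(1)] \<delta>(2)[of s u] by (simp add: w_def)
    have w_sum: "(\<Sum>u\<in>UNIV. w u) = 1 - \<delta>"
      by (simp add: w_def sum_subtractf sum_distrib_left[symmetric] Tpow_row_sum stat_sum)
    have "\<bar>Tpow k s t - stat t\<bar> \<le> (\<Sum>u\<in>UNIV. w u * \<bar>Tpow r u t - stat t\<bar>)"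
      unfolding k Tpow_deviation_eq[of n r s t \<delta>] w_def[symmetric]
      using sum_abs[of "\<lambda>u. w u * (Tpow r u t - stat t)" UNIV] w_nonneg by (simp add: abs_mult)
    also have "\<dots> \<le> (\<Sum>u\<in>UNIV. w u * (1 - \<delta>) ^ (r div n))"
      using less.IH[of r] k n w_nonneg by (intro sum_mono mult_left_mono) auto
    also have "\<dots> = (1 - \<delta>) ^ (k div n)"
      using n by (simp add: k sum_distrib_right[symmetric] w_sum)
    finally show ?thesis .
  qed
qed

lemma Tpow_tendsto_stat: "(\<lambda>k. Tpow k s t) \<longlonglongrightarrow> stat t"
proof -
  obtain n where n: "n > 0" "\<And>s t. Tpow n s t > 0" using Tpow_primitive by blast
  define \<delta> where "\<delta> = Min (range (\<lambda>(s, t). Tpow n s t))"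
  have \<delta>_le: "\<delta> \<le> Tpow n s t" for s t unfolding \<delta>_def by (rule Min_le) auto
  have "\<delta> > 0" unfolding \<delta>_def using n by (subst Min_gr_iff) auto
  moreover have "\<delta> \<le> 1" using \<delta>_le[of s t] Tpow_le_1[of n s t] by simp
  ultimately have "(\<lambda>k. (1 - \<delta>) ^ (k div n)) \<longlonglongrightarrow> 0"
    by (intro filterlim_compose[OF LIMSEQ_power_zero filterlim_at_top_div_const_nat]) (use n in auto)
  then have "(\<lambda>k. Tpow k s t - stat t) \<longlonglongrightarrow> 0"
    by (rule Lim_null_comparison[rotated])
       (use Tpow_deviation_le[OF n(1) _ \<delta>_le] \<open>\<delta> > 0\<close> in simp)
  then show ?thesis by (simp add: LIM_zero_iff)
qed

definition mixing_ratio :: "nat \<Rightarrow> real" where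
  "mixing_ratio k = Max ((\<lambda>(s, t). Tpow k s t / stat t) ` UNIV)"

lemma Tpow_le_mixing_ratio: "Tpow k s t \<le> mixing_ratio k * stat t"
proof -
  have "Tpow k s t / stat t \<le> mixing_ratio k"
    unfolding mixing_ratio_def by (rule Max_ge) auto
  then show ?thesis using stat_pos[of t] by (simp add: divide_le_eq)
qed

lemma mixing_ratio_antimono: "antimono mixing_ratio"
proof (rule decseq_SucI)
  fix k
  have "Tpow (Suc k) s t / stat t \<le> mixing_ratio k" for s t
  proof -
    have "Tpow (Suc k) s t \<le> (\<Sum>u\<in>UNIV. T s u * (mixing_ratio k * stat t))"
      unfolding nstep_prob_Suc_left
      by (intro sum_mono mult_left_mono Tpow_le_mixing_ratio) (simp add: trans_prob_def)
    also have "\<dots> = mixing_ratio k * stat t" by (simp add: sum_distrib_right[symmetric] T_row_sum)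
    finally show ?thesis using stat_pos[of t] by (simp add: divide_le_eq)
  qed
  then show "mixing_ratio (Suc k) \<le> mixing_ratio k"
    unfolding mixing_ratio_def[of "Suc k"] by (subst Max_le_iff) auto
qed

lemma mixing_ratio_tendsto_1: "mixing_ratio \<longlonglongrightarrow> 1"
proof -
  define f where "f p k = Tpow k (fst p) (snd p) / stat (snd p)" for p :: "'s \<times> 's" and k
  have lim: "f p \<longlonglongrightarrow> stat (snd p) / stat (snd p)" for p
    unfolding f_def by (intro tendsto_divide Tpow_tendsto_stat tendsto_const) (use stat_pos[of "snd p"] in simp)
  have "f p \<longlonglongrightarrow> 1" for p using lim[of p] stat_pos[of "snd p"] by simp
  then have "(\<lambda>k. Max ((\<lambda>p. f p k) ` UNIV)) \<longlonglongrightarrow> 1"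
    by (intro tendsto_Max_finite) auto
  moreover have "mixing_ratio = (\<lambda>k. Max ((\<lambda>p. f p k) ` UNIV))"
    by (simp add: fun_eq_iff mixing_ratio_def f_def split_def)
  ultimately show ?thesis by simp
qed

end

section \<open>FAIM processes\<close>

locale faim =
  fixes M :: "'w measure"
    and X :: "int \<Rightarrow> 'w \<Rightarrow> bool"
    and Y :: "int \<Rightarrow> 'w \<Rightarrow> 'y::finite"
    and S :: "int \<Rightarrow> 'w \<Rightarrow> 's::finite"
  assumes FAIM: "FAIM M X Y S"
begin

sublocale stationary_state_chain M S
  using FAIM by (intro stationary_state_chain.intro) (simp_all add: FAIM_def)

lemma measurable_X [measurable]: "X j \<in> measurable M (count_space UNIV)"
  using FAIM by (simp add: FAIM_def)

lemma measurable_Y [measurable]: "Y j \<in> measurable M (count_space UNIV)"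
  using FAIM by (simp add: FAIM_def)

definition obs_agree :: "int \<Rightarrow> int \<Rightarrow> (int \<Rightarrow> bool) \<Rightarrow> (int \<Rightarrow> 'y) \<Rightarrow> 'w \<Rightarrow> bool" where
  "obs_agree a b x y w \<longleftrightarrow> (\<forall>i\<in>{a..b}. X i w = x i \<and> Y i w = y i)"

lemma pred_obs_agree [measurable]: "Measurable.pred M (obs_agree a b x y)"
  unfolding obs_agree_def by measurable

text \<open>The past \<open>(X\<^sub>l, Y\<^sub>l, S\<^sub>l\<^sub>-\<^sub>1)\<close>, \<open>j - m \<le> l < j\<close>, and the future
  \<open>(X\<^sub>k, Y\<^sub>k, S\<^sub>k)\<close>, \<open>j \<le> k < j + n\<close>, of the conditional independence hypothesis,
  as restricted functions so that they range over a finite set.\<close>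

definition past_obs :: "nat \<Rightarrow> int \<Rightarrow> 'w \<Rightarrow> nat \<Rightarrow> bool \<times> 'y \<times> 's" where
  "past_obs m j w = (\<lambda>i\<in>{..<m}. (X (j - 1 - int i) w, Y (j - 1 - int i) w, S (j - 2 - int i) w))"

definition future_obs :: "nat \<Rightarrow> int \<Rightarrow> 'w \<Rightarrow> nat \<Rightarrow> bool \<times> 'y \<times> 's" where
  "future_obs n j w = (\<lambda>i\<in>{..<n}. (X (j + int i) w, Y (j + int i) w, S (j + int i) w))"

lemma past_obs_eq_iff:
  assumes "p \<in> {..<m} \<rightarrow>\<^sub>E UNIV"
  shows "past_obs m j w = p \<longleftrightarrow> (\<forall>i<m. X (j - 1 - int i) w = fst (p i)
           \<and> Y (j - 1 - int i) w = fst (snd (p i)) \<and> S (j - 2 - int i) w = snd (snd (p i)))"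
  using assms by (auto simp: past_obs_def PiE_def extensional_def fun_eq_iff prod_eq_iff)

lemma future_obs_eq_iff:
  assumes "f \<in> {..<n} \<rightarrow>\<^sub>E UNIV"
  shows "future_obs n j w = f \<longleftrightarrow> (\<forall>i<n. X (j + int i) w = fst (f i)
           \<and> Y (j + int i) w = fst (snd (f i)) \<and> S (j + int i) w = snd (snd (f i)))"
  using assms by (auto simp: future_obs_def PiE_def extensional_def fun_eq_iff prod_eq_iff)

lemma past_obs_in_PiE: "past_obs m j w \<in> {..<m} \<rightarrow>\<^sub>E UNIV"
  by (simp add: past_obs_def)

lemma future_obs_in_PiE: "future_obs n j w \<in> {..<n} \<rightarrow>\<^sub>E UNIV"
  by (simp add: future_obs_def)

lemma sets_ev_past_obs: "ev M (\<lambda>w. R (past_obs m j w)) \<in> sets M"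
proof (rule sets_ev_finite_valued[where V = "{..<m} \<rightarrow>\<^sub>E UNIV" and g = "past_obs m j"])
  fix p :: "nat \<Rightarrow> bool \<times> 'y \<times> 's" assume "p \<in> {..<m} \<rightarrow>\<^sub>E UNIV"
  then have "ev M (\<lambda>w. past_obs m j w = p) = ev M (\<lambda>w. \<forall>i<m. X (j - 1 - int i) w = fst (p i)
      \<and> Y (j - 1 - int i) w = fst (snd (p i)) \<and> S (j - 2 - int i) w = snd (snd (p i)))"
    by (simp add: past_obs_eq_iff ev_def)
  also have "\<dots> \<in> sets M" unfolding ev_def by measurable
  finally show "ev M (\<lambda>w. past_obs m j w = p) \<in> sets M" .
qed (simp_all add: past_obs_in_PiE finite_PiE)

lemma sets_ev_future_obs: "ev M (\<lambda>w. Q (future_obs n j w)) \<in> sets M"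
proof (rule sets_ev_finite_valued[where V = "{..<n} \<rightarrow>\<^sub>E UNIV" and g = "future_obs n j"])
  fix f :: "nat \<Rightarrow> bool \<times> 'y \<times> 's" assume "f \<in> {..<n} \<rightarrow>\<^sub>E UNIV"
  then have "ev M (\<lambda>w. future_obs n j w = f) = ev M (\<lambda>w. \<forall>i<n. X (j + int i) w = fst (f i)
      \<and> Y (j + int i) w = fst (snd (f i)) \<and> S (j + int i) w = snd (snd (f i)))"
    by (simp add: future_obs_eq_iff ev_def)
  also have "\<dots> \<in> sets M" unfolding ev_def by measurable
  finally show "ev M (\<lambda>w. future_obs n j w = f) \<in> sets M" .
qed (simp_all add: future_obs_in_PiE finite_PiE)

lemma sets_ev_state: "ev M (\<lambda>w. S l w = s) \<in> sets M"
  unfolding ev_def by measurable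

lemma cond_indep_cylinder:
  assumes p: "p \<in> {..<m} \<rightarrow>\<^sub>E UNIV" and f: "f \<in> {..<n} \<rightarrow>\<^sub>E UNIV"
  shows "Pr (\<lambda>w. past_obs m j w = p \<and> S (j - 1) w = s \<and> future_obs n j w = f) * stat s
       = Pr (\<lambda>w. past_obs m j w = p \<and> S (j - 1) w = s) * Pr (\<lambda>w. S (j - 1) w = s \<and> future_obs n j w = f)"
proof -
  have "state_cond_indep M X Y S" using FAIM by (simp add: FAIM_def)
  then have "measure M (ev M (\<lambda>w. past_obs m j w = p) \<inter> ev M (\<lambda>w. future_obs n j w = f) \<inter> ev M (\<lambda>w. S (j - 1) w = s))
        * Pr (\<lambda>w. S (j - 1) w = s)
      = measure M (ev M (\<lambda>w. past_obs m j w = p) \<inter> ev M (\<lambda>w. S (j - 1) w = s))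
        * measure M (ev M (\<lambda>w. future_obs n j w = f) \<inter> ev M (\<lambda>w. S (j - 1) w = s))"
    unfolding state_cond_indep_def Let_def
    by (simp add: past_obs_eq_iff[OF p] future_obs_eq_iff[OF f] ev_def)
  then show ?thesis
    by (simp add: ev_conj[symmetric] Pr_state conj_ac)
qed

lemma sets_ev_past_obs_eq: "ev M (\<lambda>w. past_obs m j w = p) \<in> sets M"
  using sets_ev_past_obs[where R = "\<lambda>q. q = p"] by simp

lemma sets_ev_future_obs_eq: "ev M (\<lambda>w. future_obs n j w = f) \<in> sets M"
  using sets_ev_future_obs[where Q = "\<lambda>q. q = f"] by simp

lemma Pr_past_obs_eq_sum:
  "ev M Z \<in> sets M \<Longrightarrow> Pr (\<lambda>w. R (past_obs m j w) \<and> Z w)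
     = (\<Sum>p\<in>{p \<in> {..<m} \<rightarrow>\<^sub>E UNIV. R p}. Pr (\<lambda>w. past_obs m j w = p \<and> Z w))"
  by (rule measure_ev_pred_eq_sum) (simp_all add: sets_ev_past_obs_eq past_obs_in_PiE finite_PiE)

lemma Pr_future_obs_eq_sum:
  "ev M Z \<in> sets M \<Longrightarrow> Pr (\<lambda>w. Q (future_obs n j w) \<and> Z w)
     = (\<Sum>f\<in>{f \<in> {..<n} \<rightarrow>\<^sub>E UNIV. Q f}. Pr (\<lambda>w. future_obs n j w = f \<and> Z w))"
  by (rule measure_ev_pred_eq_sum) (simp_all add: sets_ev_future_obs_eq future_obs_in_PiE finite_PiE)

lemma cond_indep_obs:
  "Pr (\<lambda>w. R (past_obs m j w) \<and> S (j - 1) w = s \<and> Q (future_obs n j w)) * stat s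
   = Pr (\<lambda>w. R (past_obs m j w) \<and> S (j - 1) w = s) * Pr (\<lambda>w. S (j - 1) w = s \<and> Q (future_obs n j w))"
proof -
  let ?VP = "{p \<in> {..<m} \<rightarrow>\<^sub>E UNIV. R p}" and ?VF = "{f \<in> {..<n} \<rightarrow>\<^sub>E UNIV. Q f}"
  let ?C = "\<lambda>w. S (j - 1) w = s"
  have "Pr (\<lambda>w. R (past_obs m j w) \<and> ?C w \<and> Q (future_obs n j w))
      = (\<Sum>p\<in>?VP. Pr (\<lambda>w. past_obs m j w = p \<and> ?C w \<and> Q (future_obs n j w)))"
    by (rule Pr_past_obs_eq_sum) (simp add: ev_conj sets.Int sets_ev_state sets_ev_future_obs)
  also have "\<dots> = (\<Sum>p\<in>?VP. Pr (\<lambda>w. Q (future_obs n j w) \<and> past_obs m j w = p \<and> ?C w))"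
    by (intro sum.cong refl measure_ev_cong) blast
  also have "\<dots> = (\<Sum>p\<in>?VP. \<Sum>f\<in>?VF. Pr (\<lambda>w. future_obs n j w = f \<and> past_obs m j w = p \<and> ?C w))"
    by (intro sum.cong refl Pr_future_obs_eq_sum) (simp add: ev_conj sets.Int sets_ev_state sets_ev_past_obs_eq)
  also have "\<dots> = (\<Sum>p\<in>?VP. \<Sum>f\<in>?VF. Pr (\<lambda>w. past_obs m j w = p \<and> ?C w \<and> future_obs n j w = f))"
    by (intro sum.cong refl measure_ev_cong) blast
  finally have "Pr (\<lambda>w. R (past_obs m j w) \<and> ?C w \<and> Q (future_obs n j w)) * stat s
      = (\<Sum>p\<in>?VP. \<Sum>f\<in>?VF. Pr (\<lambda>w. past_obs m j w = p \<and> ?C w \<and> future_obs n j w = f) * stat s)"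
    by (simp add: sum_distrib_right)
  also have "\<dots> = (\<Sum>p\<in>?VP. \<Sum>f\<in>?VF. Pr (\<lambda>w. past_obs m j w = p \<and> ?C w) * Pr (\<lambda>w. ?C w \<and> future_obs n j w = f))"
    by (intro sum.cong refl) (simp add: cond_indep_cylinder)
  also have "\<dots> = (\<Sum>p\<in>?VP. Pr (\<lambda>w. past_obs m j w = p \<and> ?C w)) * (\<Sum>f\<in>?VF. Pr (\<lambda>w. ?C w \<and> future_obs n j w = f))"
    by (rule sum_product[symmetric])
  also have "(\<Sum>p\<in>?VP. Pr (\<lambda>w. past_obs m j w = p \<and> ?C w)) = Pr (\<lambda>w. R (past_obs m j w) \<and> ?C w)"
    by (rule Pr_past_obs_eq_sum[symmetric]) (rule sets_ev_state)
  also have "(\<Sum>f\<in>?VF. Pr (\<lambda>w. ?C w \<and> future_obs n j w = f)) = (\<Sum>f\<in>?VF. Pr (\<lambda>w. future_obs n j w = f \<and> ?C w))"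
    by (intro sum.cong refl measure_ev_cong) blast
  also have "\<dots> = Pr (\<lambda>w. Q (future_obs n j w) \<and> ?C w)"
    by (rule Pr_future_obs_eq_sum[symmetric]) (rule sets_ev_state)
  also have "\<dots> = Pr (\<lambda>w. ?C w \<and> Q (future_obs n j w))"
    by (rule measure_ev_cong) blast
  finally show ?thesis .
qed

definition past_determined :: "nat \<Rightarrow> int \<Rightarrow> ('w \<Rightarrow> bool) \<Rightarrow> bool" where
  "past_determined m j P \<longleftrightarrow> (\<exists>R. \<forall>w. P w = R (past_obs m j w))"

definition future_determined :: "nat \<Rightarrow> int \<Rightarrow> ('w \<Rightarrow> bool) \<Rightarrow> bool" where
  "future_determined n j F \<longleftrightarrow> (\<exists>Q. \<forall>w. F w = Q (future_obs n j w))"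

lemma cond_indep_given_state:
  assumes "past_determined m j P" and "future_determined n j F"
  shows "Pr (\<lambda>w. P w \<and> S (j - 1) w = s \<and> F w) * stat s
       = Pr (\<lambda>w. P w \<and> S (j - 1) w = s) * Pr (\<lambda>w. S (j - 1) w = s \<and> F w)"
proof -
  obtain R Q where "\<And>w. P w = R (past_obs m j w)" "\<And>w. F w = Q (future_obs n j w)"
    using assms unfolding past_determined_def future_determined_def by blast
  then show ?thesis by (simp add: cond_indep_obs)
qed

lemma past_determined_obs_agree:
  assumes "j - int m \<le> a" "b < j"
  shows "past_determined m j (obs_agree a b x y)"
  unfolding past_determined_def
proof (intro exI allI)
  fix w
  have "past_obs m j w (nat (j - 1 - i)) = (X i w, Y i w, S (i - 1) w)" if "i \<in> {a..b}" for i
    using that assms by (auto simp: past_obs_def)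
  then show "obs_agree a b x y w = (\<forall>i\<in>{a..b}.
      fst (past_obs m j w (nat (j - 1 - i))) = x i \<and> fst (snd (past_obs m j w (nat (j - 1 - i)))) = y i)"
    by (simp add: obs_agree_def)
qed

lemma past_determined_state:
  assumes "j - 1 - int m \<le> l" "l \<le> j - 2"
  shows "past_determined m j (\<lambda>w. S l w = s)"
  unfolding past_determined_def
proof (intro exI allI)
  fix w
  show "(S l w = s) = (snd (snd (past_obs m j w (nat (j - 2 - l)))) = s)"
    using assms by (auto simp: past_obs_def)
qed

lemma future_determined_obs_agree:
  assumes "j \<le> a" "b < j + int n"
  shows "future_determined n j (obs_agree a b x y)"
  unfolding future_determined_def
proof (intro exI allI)
  fix w
  have "future_obs n j w (nat (i - j)) = (X i w, Y i w, S i w)" if "i \<in> {a..b}" for i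
    using that assms by (auto simp: future_obs_def)
  then show "obs_agree a b x y w = (\<forall>i\<in>{a..b}.
      fst (future_obs n j w (nat (i - j))) = x i \<and> fst (snd (future_obs n j w (nat (i - j)))) = y i)"
    by (simp add: obs_agree_def)
qed

lemma future_determined_state:
  assumes "j \<le> l" "l < j + int n"
  shows "future_determined n j (\<lambda>w. S l w = t)"
  unfolding future_determined_def
proof (intro exI allI)
  fix w
  show "(S l w = t) = (snd (snd (future_obs n j w (nat (l - j)))) = t)"
    using assms by (auto simp: future_obs_def)
qed

lemma future_determined_conj:
  assumes "future_determined n j F" and "future_determined n j G"
  shows "future_determined n j (\<lambda>w. F w \<and> G w)"
proof -
  obtain Q1 Q2 where "\<And>w. F w = Q1 (future_obs n j w)" "\<And>w. G w = Q2 (future_obs n j w)"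
    using assms unfolding future_determined_def by blast
  then show ?thesis unfolding future_determined_def by (intro exI[of _ "\<lambda>f. Q1 f \<and> Q2 f"]) simp
qed

lemma state_transition_prob: "Pr (\<lambda>w. S l w = s \<and> S (l + int k) w = t) = stat s * Tpow k s t"
proof (induction k arbitrary: t)
  case 0
  show ?case
  proof (cases "s = t")
    case False
    then have "ev M (\<lambda>w. S l w = s \<and> S (l + int 0) w = t) = {}" by (auto simp: ev_def)
    then show ?thesis using False by simp
  qed (simp add: Pr_state)
next
  case (Suc k)
  show ?case
  proof (cases "k = 0")
    case True
    then show ?thesis using state_pair_prob[of "l + 1" s t] by (simp add: nstep_prob_1[simplified])
  next
    case False
    define j where "j = l + int k + 1"
    have "l + int (Suc k) = j" by (simp add: j_def)
    then have "Pr (\<lambda>w. S l w = s \<and> S (l + int (Suc k)) w = t) = Pr (\<lambda>w. S l w = s \<and> S j w = t)"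
      by simp
    also have "\<dots> = (\<Sum>u\<in>UNIV. Pr (\<lambda>w. (S l w = s \<and> S j w = t) \<and> S (j - 1) w = u))"
      by (rule Pr_eq_sum_state) (unfold ev_def, measurable)
    also have "\<dots> = (\<Sum>u\<in>UNIV. stat s * Tpow k s u * T u t)"
    proof (rule sum.cong[OF refl])
      fix u
      have "past_determined k j (\<lambda>w. S l w = s)"
        using False by (intro past_determined_state) (auto simp: j_def)
      moreover have "future_determined 1 j (\<lambda>w. S j w = t)"
        by (intro future_determined_state) auto
      ultimately have "Pr (\<lambda>w. S l w = s \<and> S (j - 1) w = u \<and> S j w = t) * stat u
          = Pr (\<lambda>w. S l w = s \<and> S (j - 1) w = u) * Pr (\<lambda>w. S (j - 1) w = u \<and> S j w = t)"
        by (rule cond_indep_given_state)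
      also have "\<dots> = stat s * Tpow k s u * (stat u * T u t)"
        using Suc.IH[of u] state_pair_prob[of j u t] by (simp add: j_def)
      finally show "Pr (\<lambda>w. (S l w = s \<and> S j w = t) \<and> S (j - 1) w = u) = stat s * Tpow k s u * T u t"
        using stat_pos[of u] by (simp add: conj_ac)
    qed
    also have "\<dots> = stat s * Tpow (Suc k) s t"
      by (simp add: sum_distrib_left mult.assoc)
    finally show ?thesis .
  qed
qed

lemma joint_prob_factorization_lt:
  assumes "1 \<le> L" "L < K" "K < N"
  shows "Pr (\<lambda>w. obs_agree 1 L x y w \<and> S L w = s \<and> S K w = t \<and> obs_agree (K + 1) N x y w) * stat t
       = Pr (\<lambda>w. obs_agree 1 L x y w \<and> S L w = s) * Tpow (nat (K - L)) s t
         * Pr (\<lambda>w. S K w = t \<and> obs_agree (K + 1) N x y w)"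
proof -
  have "past_determined (nat L) (L + 1) (obs_agree 1 L x y)"
    using assms by (intro past_determined_obs_agree) auto
  moreover have "future_determined (nat (N - L)) (L + 1) (\<lambda>w. S K w = t \<and> obs_agree (K + 1) N x y w)"
    using assms by (intro future_determined_conj future_determined_state future_determined_obs_agree) auto
  ultimately have past: "Pr (\<lambda>w. obs_agree 1 L x y w \<and> S L w = s \<and> S K w = t \<and> obs_agree (K + 1) N x y w) * stat s
      = Pr (\<lambda>w. obs_agree 1 L x y w \<and> S L w = s) * Pr (\<lambda>w. S L w = s \<and> S K w = t \<and> obs_agree (K + 1) N x y w)"
    using cond_indep_given_state[of "nat L" "L + 1" _ "nat (N - L)"] by simp
  have "past_determined (nat (K - L)) (K + 1) (\<lambda>w. S L w = s)"
    using assms by (intro past_determined_state) auto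
  moreover have "future_determined (nat (N - K)) (K + 1) (obs_agree (K + 1) N x y)"
    using assms by (intro future_determined_obs_agree) auto
  ultimately have future: "Pr (\<lambda>w. S L w = s \<and> S K w = t \<and> obs_agree (K + 1) N x y w) * stat t
      = Pr (\<lambda>w. S L w = s \<and> S K w = t) * Pr (\<lambda>w. S K w = t \<and> obs_agree (K + 1) N x y w)"
    using cond_indep_given_state[of "nat (K - L)" "K + 1" _ "nat (N - K)"] by simp
  have "Pr (\<lambda>w. S L w = s \<and> S K w = t) = stat s * Tpow (nat (K - L)) s t"
    using state_transition_prob[of L s "nat (K - L)" t] assms by simp
  moreover have cancel: "e * pt = a * tp * b"
    if "ps > 0" "e * ps = a * c" "c * pt = ps * tp * b" for e pt ps a c tp b :: real
  proof -
    have "ps * (e * pt) = (e * ps) * pt" by (simp add: ac_simps)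
    also have "\<dots> = ps * (a * tp * b)" using that(2,3) by (simp add: ac_simps)
    finally show ?thesis using that(1) by simp
  qed
  ultimately show ?thesis
    using cancel[OF stat_pos[of s] past] future by simp
qed

lemma joint_prob_factorization:
  assumes "1 \<le> L" "L \<le> K" "K < N"
  shows "Pr (\<lambda>w. obs_agree 1 L x y w \<and> S L w = s \<and> S K w = t \<and> obs_agree (K + 1) N x y w) * stat t
       = Pr (\<lambda>w. obs_agree 1 L x y w \<and> S L w = s) * Tpow (nat (K - L)) s t
         * Pr (\<lambda>w. S K w = t \<and> obs_agree (K + 1) N x y w)"
proof (cases "K = L")
  case True
  have "past_determined (nat L) (L + 1) (obs_agree 1 L x y)"
    using assms by (intro past_determined_obs_agree) auto
  moreover have "future_determined (nat (N - L)) (L + 1) (obs_agree (L + 1) N x y)"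
    using assms by (intro future_determined_obs_agree) auto
  ultimately have "Pr (\<lambda>w. obs_agree 1 L x y w \<and> S L w = s \<and> obs_agree (L + 1) N x y w) * stat s
      = Pr (\<lambda>w. obs_agree 1 L x y w \<and> S L w = s) * Pr (\<lambda>w. S L w = s \<and> obs_agree (L + 1) N x y w)"
    using cond_indep_given_state[of "nat L" "L + 1" _ "nat (N - L)"] by simp
  moreover have "ev M (\<lambda>w. obs_agree 1 L x y w \<and> S L w = s \<and> S L w = t \<and> obs_agree (L + 1) N x y w) = {}"
    if "s \<noteq> t" using that by (auto simp: ev_def)
  ultimately show ?thesis using True by (cases "s = t") simp_all
next
  case False
  then show ?thesis using joint_prob_factorization_lt assms by simp
qed

lemma obs_prob_le_mixing_ratio:
  fixes L K N :: nat
  assumes "1 \<le> L" "L \<le> K" "K < N"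
  shows "Pr (\<lambda>w. obs_agree 1 (int L) x y w \<and> obs_agree (int K + 1) (int N) x y w)
       \<le> mixing_ratio (K - L) * Pr (obs_agree 1 (int L) x y) * Pr (obs_agree (int K + 1) (int N) x y)"
proof -
  let ?A = "obs_agree 1 (int L) x y" and ?B = "obs_agree (int K + 1) (int N) x y" and ?k = "K - L"
  define a where "a s = Pr (\<lambda>w. ?A w \<and> S L w = s)" for s
  define b where "b t = Pr (\<lambda>w. S K w = t \<and> ?B w)" for t
  have "Pr (\<lambda>w. ?A w \<and> ?B w) = (\<Sum>s\<in>UNIV. Pr (\<lambda>w. (?A w \<and> ?B w) \<and> S L w = s))"
    by (rule Pr_eq_sum_state) (unfold ev_def, measurable)
  also have "\<dots> = (\<Sum>s\<in>UNIV. \<Sum>t\<in>UNIV. Pr (\<lambda>w. ((?A w \<and> ?B w) \<and> S L w = s) \<and> S K w = t))"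
    by (intro sum.cong refl Pr_eq_sum_state) (unfold ev_def, measurable)
  also have "\<dots> = (\<Sum>s\<in>UNIV. \<Sum>t\<in>UNIV. Pr (\<lambda>w. ?A w \<and> S L w = s \<and> S K w = t \<and> ?B w))"
    by (intro sum.cong refl measure_ev_cong) blast
  also have "\<dots> \<le> (\<Sum>s\<in>UNIV. \<Sum>t\<in>UNIV. mixing_ratio ?k * (a s * b t))"
  proof (intro sum_mono)
    fix s t
    have "Pr (\<lambda>w. ?A w \<and> S L w = s \<and> S K w = t \<and> ?B w) * stat t = a s * Tpow ?k s t * b t"
      using joint_prob_factorization[of "int L" "int K" "int N" x y s t] assms
      unfolding a_def b_def by (simp add: nat_diff_distrib')
    also have "\<dots> \<le> a s * (mixing_ratio ?k * stat t) * b t"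
      by (intro mult_right_mono mult_left_mono Tpow_le_mixing_ratio) (simp_all add: a_def b_def)
    finally show "Pr (\<lambda>w. ?A w \<and> S L w = s \<and> S K w = t \<and> ?B w) \<le> mixing_ratio ?k * (a s * b t)"
      using stat_pos[of t] by (simp add: ac_simps)
  qed
  also have "\<dots> = mixing_ratio ?k * Pr ?A * Pr ?B"
  proof -
    have "Pr ?A = (\<Sum>s\<in>UNIV. a s)"
      unfolding a_def by (rule Pr_eq_sum_state) (unfold ev_def, measurable)
    moreover have "Pr ?B = (\<Sum>t\<in>UNIV. Pr (\<lambda>w. ?B w \<and> S K w = t))"
      by (rule Pr_eq_sum_state) (unfold ev_def, measurable)
    moreover have "Pr (\<lambda>w. ?B w \<and> S K w = t) = b t" for t
      unfolding b_def by (rule measure_ev_cong) blast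
    ultimately have "Pr ?A * Pr ?B = (\<Sum>s\<in>UNIV. \<Sum>t\<in>UNIV. a s * b t)"
      by (simp add: sum_product)
    then show ?thesis by (simp add: sum_distrib_left mult.assoc)
  qed
  finally show ?thesis .
qed

end

theorem lemma4:
  fixes M :: "'w measure"
    and X :: "int \<Rightarrow> 'w \<Rightarrow> bool"
    and Y :: "int \<Rightarrow> 'w \<Rightarrow> 'y::finite"
    and S :: "int \<Rightarrow> 'w \<Rightarrow> 's::finite"
  assumes "FAIM M X Y S"
  shows "\<exists>\<psi> :: nat \<Rightarrow> real. antimono \<psi> \<and> \<psi> \<longlonglongrightarrow> 1 \<and>
     (\<forall>N M' L. 1 \<le> L \<and> L \<le> M' \<and> M' < N \<longrightarrow>
        (\<forall>(x :: int \<Rightarrow> bool) (y :: int \<Rightarrow> 'y).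
           measure M (ev M (\<lambda>w. (\<forall>i\<in>{1..int L}. X i w = x i \<and> Y i w = y i)
                              \<and> (\<forall>i\<in>{int M' + 1..int N}. X i w = x i \<and> Y i w = y i)))
         \<le> \<psi> (M' - L)
             * measure M (ev M (\<lambda>w. \<forall>i\<in>{1..int L}. X i w = x i \<and> Y i w = y i))
             * measure M (ev M (\<lambda>w. \<forall>i\<in>{int M' + 1..int N}. X i w = x i \<and> Y i w = y i))))"
proof -
  interpret faim M X Y S by (rule faim.intro) (rule assms)
  show ?thesis
    by (intro exI[of _ mixing_ratio] conjI mixing_ratio_antimono mixing_ratio_tendsto_1 allI impI)
       (rule obs_prob_le_mixing_ratio[unfolded obs_agree_def[abs_def]]; auto)
qed

end
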